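(* Let $G$ be a finite group, $k\ge 3$ an integer, and $A_1,\ldots,A_k\subseteq G$ nonempty subsets such that the multiplication map $A_1\times\cdots\times A_k\to G$, $(a_1,\ldots,a_k)\mapsto a_1\cdots a_k$, is a bijection. Fix $i$ with $1<i<k$, and let $K$, $H$, $K'$ be the subgroups of $G$ generated by the set $A_1\cdots A_{i-1}=\{a_1\cdots a_{i-1}: a_j\in A_j\}$, by $A_i$, and by the set $A_{i+1}\cdots A_k=\{a_{i+1}\cdots a_k: a_j\in A_j\}$, respectively. Let $M$ be the subgroup of $G$ generated by all conjugates $xHx^{-1}$ with $x\in K$, and $M'$ the subgroup generated by all conjugates $xHx^{-1}$ with $x\in K'$. Then $\mathrm{card}(A_i)$ divides both $|M|$ and $|M'|$. *)

theory Defs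
  imports "HOL-Algebra.Algebra" "HOL-Library.FuncSet"
begin

fun seq_prod :: "('a, 'b) monoid_scheme \<Rightarrow> (nat \<Rightarrow> 'a) \<Rightarrow> nat \<Rightarrow> nat \<Rightarrow> 'a" where
  "seq_prod G a m 0 = (if m = 0 then a 0 else \<one>\<^bsub>G\<^esub>)"
| "seq_prod G a m (Suc n) =
     (if m \<le> Suc n then seq_prod G a m n \<otimes>\<^bsub>G\<^esub> a (Suc n) else \<one>\<^bsub>G\<^esub>)"

definition set_seq_prod :: "('a, 'b) monoid_scheme \<Rightarrow> (nat \<Rightarrow> 'a set) \<Rightarrow> nat \<Rightarrow> nat \<Rightarrow> 'a set" where
  "set_seq_prod G A m n = (\<lambda>a. seq_prod G a m n) ` (Pi\<^sub>E {m..n} A)"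

end

theory Submission
  imports Defs
begin

text \<open>
  Let f be the bijection (a_1, ..., a_k) |-> a_1 ... a_k and write f(a) = b a_i c with b in K
  and c in K'. Since b x c = (b x y^-1 b^-1) (b y c) = (b y c) (c^-1 y^-1 x c), the preimage of
  M (and likewise of M') under f is closed under replacing the i-th coordinate by any element
  of A_i. Such a set of tuples is in bijection with the product of A_i and its image under
  forgetting coordinate i, so its cardinality |M| is a multiple of |A_i|.
\<close>

lemma card_dvd_card_if_update_closed:
  assumes S: "S \<subseteq> Pi\<^sub>E I A" and i: "i \<in> I"
    and closed: "\<And>a x. a \<in> S \<Longrightarrow> x \<in> A i \<Longrightarrow> a(i := x) \<in> S"
  shows "card (A i) dvd card S"
proof -
  let ?forget = "\<lambda>a. a(i := undefined)"
  have "bij_betw (\<lambda>a. (?forget a, a i)) S (?forget ` S \<times> A i)"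
  proof (rule bij_betw_imageI)
    show "inj_on (\<lambda>a. (?forget a, a i)) S"
      by (rule inj_onI) (metis fun_upd_triv fun_upd_upd prod.inject)
    show "(\<lambda>a. (?forget a, a i)) ` S = ?forget ` S \<times> A i"
    proof (intro equalityI subsetI)
      fix p assume "p \<in> ?forget ` S \<times> A i"
      then obtain a x where "a \<in> S" "x \<in> A i" "p = (?forget a, x)" by auto
      then show "p \<in> (\<lambda>a. (?forget a, a i)) ` S"
        by (auto intro!: image_eqI[where x = "a(i := x)"] closed)
    qed (use S i in auto)
  qed
  then have "card S = card (?forget ` S) * card (A i)"
    by (simp add: bij_betw_same_card card_cartesian_product)
  then show ?thesis by simp
qed

lemma card_dvd_card_if_preimage_update_closed:
  assumes f: "bij_betw f (Pi\<^sub>E I A) C" and i: "i \<in> I" and N: "N \<subseteq> C"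
    and closed: "\<And>a x. a \<in> Pi\<^sub>E I A \<Longrightarrow> x \<in> A i \<Longrightarrow> f a \<in> N \<Longrightarrow> f (a(i := x)) \<in> N"
  shows "card (A i) dvd card N"
proof -
  let ?S = "Pi\<^sub>E I A \<inter> f -` N"
  have "bij_betw f ?S N"
    using f N by (auto simp: bij_betw_def intro: inj_on_subset)
  then have "card N = card ?S" by (simp add: bij_betw_same_card)
  moreover have "card (A i) dvd card ?S"
    using i closed PiE_fun_upd[of _ A i _ I] insert_absorb[OF i]
    by (intro card_dvd_card_if_update_closed[of _ I A]) auto
  ultimately show ?thesis by simp
qed

lemma seq_prod_cong: "(\<And>l. l \<in> {m..n} \<Longrightarrow> a l = a' l) \<Longrightarrow> seq_prod G a m n = seq_prod G a' m n"
  by (induction n) auto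

lemma seq_prod_empty: "n < m \<Longrightarrow> seq_prod G a m n = \<one>\<^bsub>G\<^esub>"
  by (cases n) auto

lemma seq_prod_in_set_seq_prod:
  assumes "a \<in> Pi\<^sub>E I A" "{m..n} \<subseteq> I"
  shows "seq_prod G a m n \<in> set_seq_prod G A m n"
proof -
  have "restrict a {m..n} \<in> Pi\<^sub>E {m..n} A"
    using assms by auto
  moreover have "seq_prod G a m n = seq_prod G (restrict a {m..n}) m n"
    by (rule seq_prod_cong) simp
  ultimately show ?thesis
    unfolding set_seq_prod_def by blast
qed

context monoid
begin

lemma seq_prod_closed: "a \<in> {m..n} \<rightarrow> carrier G \<Longrightarrow> seq_prod G a m n \<in> carrier G"
  by (induction n) (auto simp: Pi_iff)

lemma set_seq_prod_subset:
  "(\<And>l. l \<in> {m..n} \<Longrightarrow> A l \<subseteq> carrier G) \<Longrightarrow> set_seq_prod G A m n \<subseteq> carrier G"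
  unfolding set_seq_prod_def by (force intro!: seq_prod_closed dest: PiE_mem)

lemma seq_prod_singleton: "a i \<in> carrier G \<Longrightarrow> seq_prod G a i i = a i"
  by (cases i) (simp_all add: seq_prod_empty)

lemma seq_prod_split:
  assumes "a \<in> {m..n} \<rightarrow> carrier G" "m \<le> j" "j < n"
  shows "seq_prod G a m n = seq_prod G a m j \<otimes> seq_prod G a (Suc j) n"
  using assms
proof (induction n)
  case (Suc n)
  then have closed: "seq_prod G a m j \<in> carrier G" "seq_prod G a (Suc j) n \<in> carrier G"
    "a (Suc n) \<in> carrier G"
    by (auto intro!: seq_prod_closed)
  show ?case
  proof (cases "j = n")
    case True
    then show ?thesis using Suc.prems closed by (simp add: seq_prod_empty)
  next
    case False
    then have "seq_prod G a m n = seq_prod G a m j \<otimes> seq_prod G a (Suc j) n"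
      using Suc by (auto simp: Pi_iff)
    then show ?thesis using Suc.prems closed by (simp add: m_assoc)
  qed
qed simp

lemma seq_prod_update:
  assumes "a \<in> {m..n} \<rightarrow> carrier G" "x \<in> carrier G" "m < i" "i < n"
  shows "seq_prod G (a(i := x)) m n = seq_prod G a m (i - 1) \<otimes> x \<otimes> seq_prod G a (i + 1) n"
proof -
  let ?a = "a(i := x)"
  have closed: "?a \<in> {m..n} \<rightarrow> carrier G" "?a \<in> {i..n} \<rightarrow> carrier G"
    using assms by (auto simp: Pi_iff)
  have prefix: "seq_prod G ?a m (i - 1) = seq_prod G a m (i - 1)"
    by (rule seq_prod_cong) (use assms in auto)
  have suffix: "seq_prod G ?a (i + 1) n = seq_prod G a (i + 1) n"
    by (rule seq_prod_cong) simp
  have outer_closed: "seq_prod G a m (i - 1) \<in> carrier G" "seq_prod G a (i + 1) n \<in> carrier G"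
    using assms(1,3,4) by (auto intro!: seq_prod_closed simp: Pi_iff)
  have "seq_prod G ?a m n = seq_prod G ?a m (i - 1) \<otimes> seq_prod G ?a i n"
    using seq_prod_split[OF closed(1), where j = "i - 1"] assms by simp
  also have "seq_prod G ?a i n = seq_prod G ?a i i \<otimes> seq_prod G ?a (i + 1) n"
    using seq_prod_split[OF closed(2), where j = i] assms by simp
  also have "seq_prod G ?a i i = x"
    using seq_prod_singleton[of ?a i] assms by simp
  also have "seq_prod G ?a m (i - 1) \<otimes> (x \<otimes> seq_prod G ?a (i + 1) n)
      = seq_prod G a m (i - 1) \<otimes> x \<otimes> seq_prod G a (i + 1) n"
    unfolding prefix suffix using assms(2) outer_closed by (simp add: m_assoc)
  finally show ?thesis .
qed

end

locale seq_prod_factorization = monoid G for G (structure) +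
  fixes A :: "nat \<Rightarrow> 'a set" and m n :: nat
  assumes factors_closed: "\<And>j. j \<in> {m..n} \<Longrightarrow> A j \<subseteq> carrier G"
    and bij_seq_prod: "bij_betw (\<lambda>a. seq_prod G a m n) (Pi\<^sub>E {m..n} A) (carrier G)"
begin

lemma set_seq_prod_closed: "m \<le> l \<Longrightarrow> r \<le> n \<Longrightarrow> set_seq_prod G A l r \<subseteq> carrier G"
  by (auto intro!: set_seq_prod_subset factors_closed)

lemma card_dvd_card_if_middle_factor_exchangeable:
  assumes i: "m < i" "i < n" and N: "N \<subseteq> carrier G"
    and exchange: "\<And>b c x y. b \<in> set_seq_prod G A m (i - 1) \<Longrightarrow> c \<in> set_seq_prod G A (i + 1) n
      \<Longrightarrow> x \<in> A i \<Longrightarrow> y \<in> A i \<Longrightarrow> b \<otimes> y \<otimes> c \<in> N \<Longrightarrow> b \<otimes> x \<otimes> c \<in> N"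
  shows "card (A i) dvd card N"
proof (rule card_dvd_card_if_preimage_update_closed[OF bij_seq_prod _ N])
  show "i \<in> {m..n}" using i by simp
  fix a x assume a: "a \<in> Pi\<^sub>E {m..n} A" and x: "x \<in> A i"
    and y: "seq_prod G a m n \<in> N"
  define b c where "b = seq_prod G a m (i - 1)" and "c = seq_prod G a (i + 1) n"
  have b: "b \<in> set_seq_prod G A m (i - 1)" and c: "c \<in> set_seq_prod G A (i + 1) n"
    unfolding b_def c_def by (rule seq_prod_in_set_seq_prod[OF a], use i in auto)+
  have a_closed: "a \<in> {m..n} \<rightarrow> carrier G"
    using a factors_closed by blast
  have ai: "a i \<in> A i" and carrier: "a i \<in> carrier G" "x \<in> carrier G"
    using a i x factors_closed[of i] by auto
  have "b \<otimes> a i \<otimes> c \<in> N"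
    using y seq_prod_update[OF a_closed carrier(1) i] by (simp add: b_def c_def)
  then have "b \<otimes> x \<otimes> c \<in> N"
    by (rule exchange[OF b c x ai])
  then show "seq_prod G (a(i := x)) m n \<in> N"
    using seq_prod_update[OF a_closed carrier(2) i] by (simp add: b_def c_def)
qed

end

context group
begin

lemma generate_conjugates_replace_middle_left:
  assumes H: "subgroup H G" and L: "L \<subseteq> carrier G" "b \<in> L" and c: "c \<in> carrier G"
    and xy: "x \<in> H" "y \<in> H"
    and y: "b \<otimes> y \<otimes> c \<in> generate G (\<Union>l\<in>L. (\<lambda>h. l \<otimes> h \<otimes> inv l) ` H)"
  shows "b \<otimes> x \<otimes> c \<in> generate G (\<Union>l\<in>L. (\<lambda>h. l \<otimes> h \<otimes> inv l) ` H)"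
proof -
  have "x \<otimes> inv y \<in> H"
    using H xy by (simp add: subgroup.m_closed subgroup.m_inv_closed)
  then have "b \<otimes> (x \<otimes> inv y) \<otimes> inv b \<in> generate G (\<Union>l\<in>L. (\<lambda>h. l \<otimes> h \<otimes> inv l) ` H)"
    using L by (blast intro: generate.incl)
  moreover have "b \<otimes> x \<otimes> c = (b \<otimes> (x \<otimes> inv y) \<otimes> inv b) \<otimes> (b \<otimes> y \<otimes> c)"
    using subgroup.subset[OF H] L c xy by (simp add: subsetD m_assoc inv_solve_left inv_solve_left')
  ultimately show ?thesis
    using y by (simp add: generate.eng)
qed

lemma generate_conjugates_replace_middle_right:
  assumes H: "subgroup H G" and L: "subgroup L G" "c \<in> L" and b: "b \<in> carrier G"
    and xy: "x \<in> H" "y \<in> H"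
    and y: "b \<otimes> y \<otimes> c \<in> generate G (\<Union>l\<in>L. (\<lambda>h. l \<otimes> h \<otimes> inv l) ` H)"
  shows "b \<otimes> x \<otimes> c \<in> generate G (\<Union>l\<in>L. (\<lambda>h. l \<otimes> h \<otimes> inv l) ` H)"
proof -
  have "inv y \<otimes> x \<in> H" "inv c \<in> L"
    using H L xy by (simp_all add: subgroup.m_closed subgroup.m_inv_closed)
  then have "inv c \<otimes> (inv y \<otimes> x) \<otimes> inv (inv c) \<in> generate G (\<Union>l\<in>L. (\<lambda>h. l \<otimes> h \<otimes> inv l) ` H)"
    by (blast intro: generate.incl)
  moreover have "b \<otimes> x \<otimes> c = (b \<otimes> y \<otimes> c) \<otimes> (inv c \<otimes> (inv y \<otimes> x) \<otimes> inv (inv c))"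
    using subgroup.subset[OF H] subgroup.subset[OF L(1)] L(2) b xy
    by (simp add: subsetD m_assoc flip: m_assoc[of c "inv c"] m_assoc[of y "inv y"])
  ultimately show ?thesis
    using y by (simp add: generate.eng)
qed

end

locale group_seq_prod_factorization = seq_prod_factorization + group
begin

lemma generate_conjugates_subset:
  "subgroup H G \<Longrightarrow> L \<subseteq> carrier G \<Longrightarrow> generate G (\<Union>l\<in>L. (\<lambda>h. l \<otimes> h \<otimes> inv l) ` H) \<subseteq> carrier G"
  by (intro generate_incl) (auto dest: subgroup.subset)

lemma card_factor_dvd_card_generate_conjugates_left:
  assumes i: "m < i" "i < n" and H: "subgroup H G" "A i \<subseteq> H"
    and L: "set_seq_prod G A m (i - 1) \<subseteq> L" "L \<subseteq> carrier G"
  shows "card (A i) dvd card (generate G (\<Union>l\<in>L. (\<lambda>h. l \<otimes> h \<otimes> inv l) ` H))"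
proof (rule card_dvd_card_if_middle_factor_exchangeable[OF i generate_conjugates_subset[OF H(1) L(2)]])
  fix b c x y
  assume "b \<in> set_seq_prod G A m (i - 1)" "c \<in> set_seq_prod G A (i + 1) n" "x \<in> A i" "y \<in> A i"
  then have "b \<in> L" "c \<in> carrier G" "x \<in> H" "y \<in> H"
    using H(2) L(1) set_seq_prod_closed[of "i + 1" n] i by auto
  then show "b \<otimes> y \<otimes> c \<in> generate G (\<Union>l\<in>L. (\<lambda>h. l \<otimes> h \<otimes> inv l) ` H)
      \<Longrightarrow> b \<otimes> x \<otimes> c \<in> generate G (\<Union>l\<in>L. (\<lambda>h. l \<otimes> h \<otimes> inv l) ` H)"
    by (rule generate_conjugates_replace_middle_left[OF H(1) L(2)])
qed

lemma card_factor_dvd_card_generate_conjugates_right: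
  assumes i: "m < i" "i < n" and H: "subgroup H G" "A i \<subseteq> H"
    and L: "set_seq_prod G A (i + 1) n \<subseteq> L" "subgroup L G"
  shows "card (A i) dvd card (generate G (\<Union>l\<in>L. (\<lambda>h. l \<otimes> h \<otimes> inv l) ` H))"
proof (rule card_dvd_card_if_middle_factor_exchangeable
    [OF i generate_conjugates_subset[OF H(1) subgroup.subset[OF L(2)]]])
  fix b c x y
  assume "b \<in> set_seq_prod G A m (i - 1)" "c \<in> set_seq_prod G A (i + 1) n" "x \<in> A i" "y \<in> A i"
  then have "c \<in> L" "b \<in> carrier G" "x \<in> H" "y \<in> H"
    using H(2) L(1) set_seq_prod_closed[of m "i - 1"] i by (auto simp: subset_iff)
  then show "b \<otimes> y \<otimes> c \<in> generate G (\<Union>l\<in>L. (\<lambda>h. l \<otimes> h \<otimes> inv l) ` H)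
      \<Longrightarrow> b \<otimes> x \<otimes> c \<in> generate G (\<Union>l\<in>L. (\<lambda>h. l \<otimes> h \<otimes> inv l) ` H)"
    by (rule generate_conjugates_replace_middle_right[OF H(1) L(2)])
qed

end

theorem lemma2p3:
  fixes G (structure) and A :: "nat \<Rightarrow> 'a set" and k i :: nat
  assumes "group G" and "finite (carrier G)" and "k \<ge> 3"
    and "\<And>j. j \<in> {1..k} \<Longrightarrow> A j \<subseteq> carrier G"
    and "\<And>j. j \<in> {1..k} \<Longrightarrow> A j \<noteq> {}"
    and "bij_betw (\<lambda>a. seq_prod G a 1 k) (Pi\<^sub>E {1..k} A) (carrier G)"
    and "1 < i" and "i < k"
  defines "K \<equiv> generate G (set_seq_prod G A 1 (i - 1))"
    and "H \<equiv> generate G (A i)"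
    and "K' \<equiv> generate G (set_seq_prod G A (i + 1) k)"
  defines "M \<equiv> generate G (\<Union>x\<in>K. (\<lambda>h. x \<otimes> h \<otimes> inv x) ` H)"
    and "M' \<equiv> generate G (\<Union>x\<in>K'. (\<lambda>h. x \<otimes> h \<otimes> inv x) ` H)"
  shows "card (A i) dvd card M \<and> card (A i) dvd card M'"
proof -
  interpret group G by fact
  interpret group_seq_prod_factorization G A 1 k
    by unfold_locales (use assms(4,6) in auto)
  have H: "subgroup H G" "A i \<subseteq> H"
    using factors_closed[of i] assms(7,8) unfolding H_def by (auto intro: generate_is_subgroup generate.incl)
  have prefixes: "set_seq_prod G A 1 (i - 1) \<subseteq> carrier G"
    and suffixes: "set_seq_prod G A (i + 1) k \<subseteq> carrier G"
    using assms(8) by (simp_all add: set_seq_prod_closed)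
  have K: "set_seq_prod G A 1 (i - 1) \<subseteq> K" "K \<subseteq> carrier G"
    unfolding K_def using generate_incl[OF prefixes] by (auto intro: generate.incl)
  have K': "set_seq_prod G A (i + 1) k \<subseteq> K'" "subgroup K' G"
    unfolding K'_def using generate_is_subgroup[OF suffixes] by (auto intro: generate.incl)
  show ?thesis
    unfolding M_def M'_def
    using card_factor_dvd_card_generate_conjugates_left[OF assms(7,8) H K]
      card_factor_dvd_card_generate_conjugates_right[OF assms(7,8) H K'] ..
qed

end
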